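(* Let $d\ge 2$, let $K$ be a hemisphere of $S^d$ and let $p\in \mathrm{bd}(K)$. Let $pq\subset K$ be an arc orthogonal to $\mathrm{bd}(K)$ at $p$, with $q$ in the interior of $K$ and $|pq|<\frac{\pi}{2}$. Consider all lunes of the form $K\cap M$, where $M$ is a hemisphere with $q\in\mathrm{bd}(M)$ and $p\in M$ (so that $pq\subset K\cap M$). Let $K_\perp$ be the hemisphere with $q\in \mathrm{bd}(K_\perp)$ and $p\in K_\perp$ such that $pq$ is orthogonal to $\mathrm{bd}(K_\perp)$ at $q$. Then among all these lunes, $K\cap K_\perp$ has the smallest thickness.
   Context: $S^d$ is the unit sphere in $E^{d+1}$. For non-antipodal points $a,b$, the arc $ab$ is the shorter great-circle arc joining them and $|ab|$ is its length (the spherical distance). A hemisphere is the intersection of $S^d$ with a closed half-space of $E^{d+1}$ whose boundary hyperplane passes through the origin; its center is the point of the hemisphere at distance $\frac{\pi}{2}$ from its boundary. If hemispheres $G,H$ are different and not opposite (opposite means their centers are antipodal), $L=G\cap H$ is a lune; $G/H$ and $H/G$ denote the parts of $\mathrm{bd}(G)$ and $\mathrm{bd}(H)$ contained in $G\cap H$ (these are $(d-1)$-dimensional hemispheres, i.e., sets of points of a $(d-1)$-dimensional great sphere at distance at most $\frac{\pi}{2}$ from a point, called the center). The thickness $\Delta(L)$ of the lune is the spherical distance between the centers of $G/H$ and $H/G$. *)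

theory Defs
  imports "HOL-Analysis.Analysis"
begin

text \<open>The unit sphere S^d is the unit sphere of a Euclidean space of dimension d+1.\<close>
definition usphere :: "'a::euclidean_space set" where
  "usphere = {x. norm x = 1}"

definition sdist :: "'a::euclidean_space \<Rightarrow> 'a \<Rightarrow> real" where
  "sdist a b = arccos (a \<bullet> b)"

definition sdist_set :: "'a::euclidean_space \<Rightarrow> 'a set \<Rightarrow> real" where
  "sdist_set a S = (INF x\<in>S. sdist a x)"

text \<open>The arc ab (for non-antipodal a, b): points of the sphere on the shorter
  great-circle arc joining them.\<close>
definition sarc :: "'a::euclidean_space \<Rightarrow> 'a \<Rightarrow> 'a set" where
  "sarc a b = {x \<in> usphere. \<exists>s t. s \<ge> 0 \<and> t \<ge> 0 \<and> x = s *\<^sub>R a + t *\<^sub>R b}"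

definition hemi :: "'a::euclidean_space \<Rightarrow> 'a set" where
  "hemi c = {x \<in> usphere. x \<bullet> c \<ge> 0}"

definition hemi_bd :: "'a::euclidean_space \<Rightarrow> 'a set" where
  "hemi_bd c = {x \<in> usphere. x \<bullet> c = 0}"

definition hemi_int :: "'a::euclidean_space \<Rightarrow> 'a set" where
  "hemi_int c = {x \<in> usphere. x \<bullet> c > 0}"

text \<open>G/H for hemispheres G, H with centers g, h: the part of bd(G) contained in G \<inter> H.\<close>
definition lune_face :: "'a::euclidean_space \<Rightarrow> 'a \<Rightarrow> 'a set" where
  "lune_face g h = hemi_bd g \<inter> hemi h"

definition lune_face_center :: "'a::euclidean_space \<Rightarrow> 'a \<Rightarrow> 'a" where
  "lune_face_center g h =
     (THE c. c \<in> lune_face g h \<and> sdist_set c (hemi_bd g \<inter> hemi_bd h) = pi / 2)"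

definition lune_thickness :: "'a::euclidean_space \<Rightarrow> 'a \<Rightarrow> real" where
  "lune_thickness g h = sdist (lune_face_center g h) (lune_face_center h g)"

text \<open>The arc ab is orthogonal at a to the great sphere bd(H) (H with center c):
  a lies on bd(H) and the tangent vector of the arc at a is orthogonal to every
  tangent vector of bd(H) at a.\<close>
definition arc_orth_at :: "'a::euclidean_space \<Rightarrow> 'a \<Rightarrow> 'a \<Rightarrow> bool" where
  "arc_orth_at a b c \<longleftrightarrow> a \<in> hemi_bd c \<and>
     (\<forall>v. v \<bullet> a = 0 \<and> v \<bullet> c = 0 \<longrightarrow> (b - (a \<bullet> b) *\<^sub>R a) \<bullet> v = 0)"

end

theory Submission
  imports Defs
begin

text \<open>
  For hemispheres with unit centers g and h, the center of the face G/H is the normalized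
  component of h orthogonal to g, so the thickness of G \<inter> H is arccos (- g \<bullet> h).
  Orthogonality of the arc pq to bd(K) at p means that its tangent at p points along k,
  hence q = c p + s k with c = cos |pq| and s = sin |pq|; orthogonality to bd(K_perp) at q
  likewise gives k \<bullet> k_perp = - c, so K \<inter> K_perp has thickness |pq|.
  For an admissible M with center m, the conditions m \<bullet> q = 0 and m \<bullet> p \<ge> 0, together
  with Bessel's inequality for the orthonormal pair p, k, force - m \<bullet> k \<le> c, so K \<inter> M is
  at least as thick.
\<close>

lemma hemi_bd_Int_nonempty:
  fixes g h :: "'a::euclidean_space"
  assumes "DIM('a) \<ge> 3"
  shows "hemi_bd g \<inter> hemi_bd h \<noteq> {}"
proof -
  have "dim {g, h} \<le> card {g, h}" by (rule dim_le_card) (auto intro: span_base)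
  also have "\<dots> \<le> 2" by (simp add: card_insert_le_m1)
  finally have "dim {g, h} < DIM('a)" using assms by linarith
  then obtain x where x: "x \<noteq> 0" "\<And>y. y \<in> span {g, h} \<Longrightarrow> orthogonal x y"
    using orthogonal_to_subspace_exists by blast
  have "orthogonal x g" "orthogonal x h" using x(2) by (auto intro: span_base)
  then have "x /\<^sub>R norm x \<in> hemi_bd g \<inter> hemi_bd h"
    using x(1) by (auto simp: hemi_bd_def usphere_def orthogonal_def)
  then show ?thesis by blast
qed

lemma inner_unit_bounds:
  fixes x y :: "'a::euclidean_space"
  assumes "norm x = 1" "norm y = 1"
  shows "-1 \<le> x \<bullet> y" "x \<bullet> y \<le> 1"
  using Cauchy_Schwarz_ineq2[of x y] assms by auto

lemma sdist_set_eq_pi_half_iff_orthogonal: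
  fixes c :: "'a::euclidean_space"
  assumes c: "norm c = 1" and S: "S \<subseteq> usphere" "S \<noteq> {}" "\<And>x. x \<in> S \<Longrightarrow> - x \<in> S"
  shows "sdist_set c S = pi / 2 \<longleftrightarrow> (\<forall>x\<in>S. c \<bullet> x = 0)"
proof
  have unit: "norm x = 1" if "x \<in> S" for x using S(1) that by (auto simp: usphere_def)
  assume dist: "sdist_set c S = pi / 2"
  have bdd: "bdd_below ((\<lambda>x. sdist c x) ` S)"
    by (rule bdd_belowI2[where m = 0]) (auto simp: sdist_def intro: arccos_lbound inner_unit_bounds c unit)
  have nonpos: "c \<bullet> x \<le> 0" if x: "x \<in> S" for x
  proof -
    note bounds = inner_unit_bounds[OF c unit[OF x]]
    have "pi / 2 \<le> arccos (c \<bullet> x)"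
      using cINF_lower[OF bdd x] dist by (simp add: sdist_set_def sdist_def)
    then have "cos (arccos (c \<bullet> x)) \<le> cos (pi / 2)"
      using bounds arccos_ubound by (intro cos_monotone_0_pi_le) auto
    then show ?thesis using bounds by simp
  qed
  show "\<forall>x\<in>S. c \<bullet> x = 0"
    using nonpos S(3) by (metis inner_minus_right neg_le_0_iff_le order_antisym)
next
  assume "\<forall>x\<in>S. c \<bullet> x = 0"
  then have "sdist_set c S = (INF x\<in>S. pi / 2)"
    unfolding sdist_set_def sdist_def by (intro INF_cong) auto
  then show "sdist_set c S = pi / 2" using S(2) by simp
qed

lemma orthogonal_to_hemi_bd_Int_decomp:
  fixes g u x :: "'a::euclidean_space"
  assumes g: "norm g = 1" and u: "norm u = 1" and gu: "g \<bullet> u = 0"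
    and x: "\<forall>y \<in> hemi_bd g \<inter> hemi_bd u. x \<bullet> y = 0"
  shows "x = (x \<bullet> g) *\<^sub>R g + (x \<bullet> u) *\<^sub>R u"
proof -
  define r where "r = x - (x \<bullet> g) *\<^sub>R g - (x \<bullet> u) *\<^sub>R u"
  have gg: "g \<bullet> g = 1" and uu: "u \<bullet> u = 1" using g u by (simp_all add: norm_eq_1)
  have rg: "r \<bullet> g = 0" and ru: "r \<bullet> u = 0"
    by (simp_all add: r_def inner_diff_left gg uu gu inner_commute[of u g])
  have "r = 0"
  proof (rule ccontr)
    assume "r \<noteq> 0"
    then have "r /\<^sub>R norm r \<in> hemi_bd g \<inter> hemi_bd u"
      using rg ru by (simp add: hemi_bd_def usphere_def)
    then have "x \<bullet> (r /\<^sub>R norm r) = 0" using x by blast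
    then have "x \<bullet> r = 0" using \<open>r \<noteq> 0\<close> by simp
    moreover have "x \<bullet> r = r \<bullet> r"
      by (simp add: r_def inner_diff_left inner_diff_right rg ru inner_commute gg uu gu)
    ultimately show False using \<open>r \<noteq> 0\<close> by simp
  qed
  then show ?thesis by (simp add: r_def algebra_simps)
qed

lemma orthogonal_component_nonzero:
  fixes g h :: "'a::real_inner"
  assumes g: "norm g = 1" and h: "norm h = 1" and "h \<noteq> g" "h \<noteq> - g"
  shows "h - (g \<bullet> h) *\<^sub>R g \<noteq> 0"
proof
  assume "h - (g \<bullet> h) *\<^sub>R g = 0"
  then have "h = (g \<bullet> h) *\<^sub>R g" by simp
  moreover from this have "\<bar>g \<bullet> h\<bar> = 1" using g h by (metis mult.right_neutral norm_scaleR)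
  ultimately show False using assms(3,4) by (cases "g \<bullet> h \<ge> 0") auto
qed

lemma lune_face_center_eq:
  fixes g h :: "'a::euclidean_space"
  assumes dim: "DIM('a) \<ge> 3" and g: "norm g = 1" and h: "norm h = 1"
    and "h \<noteq> g" "h \<noteq> - g"
  shows "lune_face_center g h = (h - (g \<bullet> h) *\<^sub>R g) /\<^sub>R norm (h - (g \<bullet> h) *\<^sub>R g)"
proof -
  define a where "a = g \<bullet> h"
  define w where "w = h - a *\<^sub>R g"
  define n where "n = norm w"
  define u where "u = w /\<^sub>R n"
  have gg: "g \<bullet> g = 1" and hh: "h \<bullet> h = 1" using g h by (simp_all add: norm_eq_1)
  have wg: "w \<bullet> g = 0" by (simp add: w_def a_def inner_diff_left gg inner_commute[of h g])
  have wh: "w \<bullet> h = 1 - a\<^sup>2" by (simp add: w_def inner_diff_left hh a_def power2_eq_square)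
  have n: "n > 0" using orthogonal_component_nonzero[OF g h assms(4,5)] by (simp add: n_def w_def a_def)
  have "n\<^sup>2 = 1 - a\<^sup>2"
    using wg wh by (simp add: n_def power2_norm_eq_inner w_def inner_diff_right inner_commute[of g])
  then have uh: "u \<bullet> h = n" using wh n by (simp add: u_def power2_eq_square field_simps)
  have ug: "u \<bullet> g = 0" and u: "norm u = 1" using wg n by (simp_all add: u_def n_def)
  have h_decomp: "h = a *\<^sub>R g + n *\<^sub>R u" using n by (simp add: u_def w_def)
  have bd_eq: "hemi_bd g \<inter> hemi_bd h = hemi_bd g \<inter> hemi_bd u"
    using n by (auto simp: hemi_bd_def h_decomp inner_add_right)
  have S: "hemi_bd g \<inter> hemi_bd u \<subseteq> usphere" "hemi_bd g \<inter> hemi_bd u \<noteq> {}"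
      "\<And>x. x \<in> hemi_bd g \<inter> hemi_bd u \<Longrightarrow> - x \<in> hemi_bd g \<inter> hemi_bd u"
    using hemi_bd_Int_nonempty[OF dim, of g u] by (auto simp: hemi_bd_def usphere_def)
  have center_iff: "c \<in> lune_face g h \<and> sdist_set c (hemi_bd g \<inter> hemi_bd h) = pi / 2 \<longleftrightarrow> c = u"
    for c
  proof
    assume c: "c \<in> lune_face g h \<and> sdist_set c (hemi_bd g \<inter> hemi_bd h) = pi / 2"
    then have cn: "norm c = 1" and cg: "c \<bullet> g = 0" and ch: "c \<bullet> h \<ge> 0"
      by (auto simp: lune_face_def hemi_bd_def hemi_def usphere_def inner_commute)
    have "c = (c \<bullet> u) *\<^sub>R u"
      using orthogonal_to_hemi_bd_Int_decomp[OF g u, of c] c cg ug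
        sdist_set_eq_pi_half_iff_orthogonal[OF cn S]
      by (simp add: bd_eq inner_commute)
    moreover from this have "\<bar>c \<bullet> u\<bar> = 1" using cn u by (metis norm_scaleR mult.right_neutral)
    moreover have "c \<bullet> h = (c \<bullet> u) * n" by (simp add: h_decomp inner_add_right cg)
    then have "c \<bullet> u \<ge> 0" using ch n by (simp add: zero_le_mult_iff)
    ultimately show "c = u" by (metis abs_of_nonneg scaleR_one)
  next
    assume "c = u"
    moreover have "sdist_set u (hemi_bd g \<inter> hemi_bd u) = pi / 2"
      using sdist_set_eq_pi_half_iff_orthogonal[OF u S] by (simp add: hemi_bd_def inner_commute)
    ultimately show "c \<in> lune_face g h \<and> sdist_set c (hemi_bd g \<inter> hemi_bd h) = pi / 2"
      unfolding bd_eq using u ug uh n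
      by (auto simp: lune_face_def hemi_bd_def hemi_def usphere_def inner_commute)
  qed
  have "lune_face_center g h = u" unfolding lune_face_center_def using center_iff by blast
  then show ?thesis by (simp add: u_def w_def n_def a_def)
qed

lemma lune_thickness_eq:
  fixes g h :: "'a::euclidean_space"
  assumes dim: "DIM('a) \<ge> 3" and g: "norm g = 1" and h: "norm h = 1"
    and "h \<noteq> g" "h \<noteq> - g"
  shows "lune_thickness g h = arccos (- (g \<bullet> h))"
proof -
  define a where "a = g \<bullet> h"
  define w1 where "w1 = h - a *\<^sub>R g"
  define w2 where "w2 = g - a *\<^sub>R h"
  have gg: "g \<bullet> g = 1" and hh: "h \<bullet> h = 1" and hg: "h \<bullet> g = a"
    using g h by (simp_all add: norm_eq_1 a_def inner_commute)
  have centers: "lune_face_center g h = w1 /\<^sub>R norm w1" "lune_face_center h g = w2 /\<^sub>R norm w2"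
  proof -
    have "g \<noteq> h" "g \<noteq> - h" using assms(4,5) by auto
    then show "lune_face_center g h = w1 /\<^sub>R norm w1" "lune_face_center h g = w2 /\<^sub>R norm w2"
      using lune_face_center_eq[OF dim g h assms(4,5)] lune_face_center_eq[OF dim h g]
      by (simp_all add: w1_def w2_def a_def inner_commute)
  qed
  have "(norm w1)\<^sup>2 = 1 - a\<^sup>2" "(norm w2)\<^sup>2 = 1 - a\<^sup>2"
    unfolding power2_norm_eq_inner
    by (simp_all add: w1_def w2_def inner_diff_left inner_diff_right gg hh hg a_def[symmetric]
        power2_eq_square)
  then have norms: "norm w1 * norm w2 = 1 - a\<^sup>2"
    by (metis norm_ge_zero power2_eq_iff_nonneg power2_eq_square)
  have "w1 \<noteq> 0" using orthogonal_component_nonzero[OF g h assms(4,5)] by (simp add: w1_def a_def)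
  then have "1 - a\<^sup>2 \<noteq> 0" using \<open>(norm w1)\<^sup>2 = 1 - a\<^sup>2\<close> by (metis power_not_zero norm_eq_zero)
  moreover have "w1 \<bullet> w2 = - a * (1 - a\<^sup>2)"
    by (simp add: w1_def w2_def inner_diff_left inner_diff_right gg hh hg a_def[symmetric]
        power2_eq_square algebra_simps)
  ultimately have "(w1 \<bullet> w2) / (norm w1 * norm w2) = - a" using norms by simp
  moreover have "lune_face_center g h \<bullet> lune_face_center h g = (w1 \<bullet> w2) / (norm w1 * norm w2)"
    by (simp add: centers divide_inverse mult_ac)
  ultimately have "lune_face_center g h \<bullet> lune_face_center h g = - a" by simp
  then show ?thesis by (simp add: lune_thickness_def sdist_def a_def)
qed

lemma arc_orth_at_tangent_eq:
  fixes a b c :: "'a::euclidean_space"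
  assumes a: "norm a = 1" and c: "norm c = 1" and orth: "arc_orth_at a b c"
  shows "b - (a \<bullet> b) *\<^sub>R a = (b \<bullet> c) *\<^sub>R c"
proof -
  define t where "t = b - (a \<bullet> b) *\<^sub>R a"
  define v where "v = t - (b \<bullet> c) *\<^sub>R c"
  have aa: "a \<bullet> a = 1" and cc: "c \<bullet> c = 1" using a c by (simp_all add: norm_eq_1)
  have ac: "a \<bullet> c = 0" using orth by (simp add: arc_orth_at_def hemi_bd_def)
  have va: "v \<bullet> a = 0"
    by (simp add: v_def t_def inner_diff_left aa ac inner_commute[of b a] inner_commute[of c a])
  have vc: "v \<bullet> c = 0"
    by (simp add: v_def t_def inner_diff_left cc inner_commute[of c a] ac)
  have "t \<bullet> v = 0" using orth va vc by (simp add: arc_orth_at_def t_def)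
  moreover have "t \<bullet> v = v \<bullet> v"
  proof -
    have "t = v + (b \<bullet> c) *\<^sub>R c" by (simp add: v_def)
    then show ?thesis using vc by (simp add: inner_add_left inner_commute[of c v])
  qed
  ultimately show ?thesis by (simp add: v_def t_def)
qed

lemma arc_orth_at_hemi_bd_decomp:
  fixes k p q :: "'a::euclidean_space"
  assumes k: "norm k = 1" and p: "p \<in> hemi_bd k" and q: "norm q = 1"
    and orth: "arc_orth_at p q k"
  shows "q = (p \<bullet> q) *\<^sub>R p + (q \<bullet> k) *\<^sub>R k" "(p \<bullet> q)\<^sup>2 + (q \<bullet> k)\<^sup>2 = 1"
proof -
  have pn: "norm p = 1" and pk: "p \<bullet> k = 0" using p by (auto simp: hemi_bd_def usphere_def)
  show decomp: "q = (p \<bullet> q) *\<^sub>R p + (q \<bullet> k) *\<^sub>R k"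
    using arc_orth_at_tangent_eq[OF pn k orth] by (simp add: algebra_simps)
  have "1 = q \<bullet> q" using q by (simp add: norm_eq_1)
  also have "\<dots> = (p \<bullet> q)\<^sup>2 + (q \<bullet> k)\<^sup>2"
    using pn k by (subst (1 2) decomp) (simp add: inner_add_left inner_add_right norm_eq_1 pk
        inner_commute[of k p] power2_eq_square)
  finally show "(p \<bullet> q)\<^sup>2 + (q \<bullet> k)\<^sup>2 = 1" ..
qed

lemma inner_nonneg_if_sdist_le_pi_half:
  fixes a b :: "'a::euclidean_space"
  assumes "norm a = 1" "norm b = 1" "sdist a b \<le> pi / 2"
  shows "a \<bullet> b \<ge> 0"
proof (rule ccontr)
  assume "\<not> a \<bullet> b \<ge> 0"
  then have "arccos 0 < arccos (a \<bullet> b)"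
    using inner_unit_bounds[OF assms(1,2)] by (intro arccos_less_arccos) auto
  then show False using assms(3) by (simp add: sdist_def)
qed

lemma inner_orthonormal_pair_sum_sq_le:
  fixes p k m :: "'a::real_inner"
  assumes p: "norm p = 1" and k: "norm k = 1" and pk: "p \<bullet> k = 0" and m: "norm m = 1"
  shows "(m \<bullet> p)\<^sup>2 + (m \<bullet> k)\<^sup>2 \<le> 1"
proof -
  define r where "r = m - (m \<bullet> p) *\<^sub>R p - (m \<bullet> k) *\<^sub>R k"
  have "0 \<le> r \<bullet> r" by simp
  also have "r \<bullet> r = 1 - (m \<bullet> p)\<^sup>2 - (m \<bullet> k)\<^sup>2"
    using p k m by (simp add: r_def inner_diff_left inner_diff_right norm_eq_1 pk
        inner_commute[of k p] inner_commute[of p m] inner_commute[of k m] power2_eq_square)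
  finally show ?thesis by simp
qed

lemma neg_le_of_orthogonal_sum:
  fixes c s \<alpha> \<gamma> :: real
  assumes "c \<ge> 0" "s > 0" "c\<^sup>2 + s\<^sup>2 = 1" "\<alpha> \<ge> 0" "c * \<alpha> + s * \<gamma> = 0" "\<alpha>\<^sup>2 + \<gamma>\<^sup>2 \<le> 1"
  shows "- \<gamma> \<le> c"
proof -
  have s_gamma: "s * (- \<gamma>) = c * \<alpha>" using assms(5) by linarith
  have "\<alpha>\<^sup>2 = \<alpha>\<^sup>2 * (c\<^sup>2 + s\<^sup>2)" using assms(3) by simp
  also have "\<dots> = (c * \<alpha>)\<^sup>2 + s\<^sup>2 * \<alpha>\<^sup>2" by (simp add: power_mult_distrib algebra_simps)
  also have "(c * \<alpha>)\<^sup>2 = s\<^sup>2 * \<gamma>\<^sup>2"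
    unfolding s_gamma[symmetric] by (simp add: power_mult_distrib)
  also have "s\<^sup>2 * \<gamma>\<^sup>2 + s\<^sup>2 * \<alpha>\<^sup>2 = s\<^sup>2 * (\<alpha>\<^sup>2 + \<gamma>\<^sup>2)" by (simp add: algebra_simps)
  also have "\<dots> \<le> s\<^sup>2" using assms(6) by (simp add: mult_left_le)
  finally have "\<alpha>\<^sup>2 \<le> s\<^sup>2" .
  then have "\<alpha> \<le> s" by (rule power2_le_imp_le) (use assms(2) in simp)
  then have "c * \<alpha> \<le> c * s" using assms(1) by (rule mult_left_mono)
  then have "s * (- \<gamma>) \<le> s * c" by (simp only: s_gamma mult.commute[of c s])
  then show ?thesis using assms(2) by (rule mult_left_le_imp_le)
qed

lemma perp_hemisphere_center_inner:
  fixes p q k kp :: "'a::euclidean_space"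
  assumes p: "norm p = 1" and k: "norm k = 1" and pk: "p \<bullet> k = 0"
    and q: "norm q = 1" and q_decomp: "q = c *\<^sub>R p + s *\<^sub>R k" and s: "s > 0"
    and cs: "c\<^sup>2 + s\<^sup>2 = 1"
    and kp: "norm kp = 1" and p_kp: "p \<bullet> kp \<ge> 0" and orth: "arc_orth_at q p kp"
  shows "p \<bullet> kp = s" "k \<bullet> kp = - c"
proof -
  have pp: "p \<bullet> p = 1" and kk: "k \<bullet> k = 1" using p k by (simp_all add: norm_eq_1)
  have "q \<bullet> p = c" by (simp add: q_decomp inner_add_left pp inner_commute[of k p] pk)
  then have "p - c *\<^sub>R q = (p \<bullet> kp) *\<^sub>R kp"
    using arc_orth_at_tangent_eq[OF q kp orth] by simp
  also have "p - c *\<^sub>R q = s *\<^sub>R (s *\<^sub>R p - c *\<^sub>R k)"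
  proof -
    have "p - c *\<^sub>R q = (1 - c\<^sup>2) *\<^sub>R p - (c * s) *\<^sub>R k"
      by (subst q_decomp) (simp add: algebra_simps power2_eq_square)
    also have "1 - c\<^sup>2 = s\<^sup>2" using cs by simp
    also have "s\<^sup>2 *\<^sub>R p - (c * s) *\<^sub>R k = s *\<^sub>R (s *\<^sub>R p - c *\<^sub>R k)"
      by (simp add: power2_eq_square algebra_simps)
    finally show ?thesis .
  qed
  finally have tangent: "(p \<bullet> kp) *\<^sub>R kp = s *\<^sub>R (s *\<^sub>R p - c *\<^sub>R k)" ..
  have "(p \<bullet> kp)\<^sup>2 = s\<^sup>2"
    using arg_cong[OF tangent, of "inner p"] by (simp add: power2_eq_square inner_diff_right pp pk)
  then show p_kp_eq: "p \<bullet> kp = s" using p_kp s by (simp add: power2_eq_iff_nonneg)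
  have "s * (k \<bullet> kp) = s * (- c)"
    using arg_cong[OF tangent, of "inner k"] p_kp_eq
    by (simp add: inner_diff_right kk inner_commute[of k p] pk)
  then show "k \<bullet> kp = - c" using s by (metis less_irrefl mult_left_cancel)
qed

lemma admissible_center_inner_le:
  fixes p q k m :: "'a::euclidean_space"
  assumes p: "norm p = 1" and k: "norm k = 1" and pk: "p \<bullet> k = 0"
    and q_decomp: "q = c *\<^sub>R p + s *\<^sub>R k" and c: "c \<ge> 0" and s: "s > 0" and cs: "c\<^sup>2 + s\<^sup>2 = 1"
    and m: "norm m = 1" and m_q: "q \<bullet> m = 0" and m_p: "p \<bullet> m \<ge> 0"
  shows "- (k \<bullet> m) \<le> c"
proof (rule neg_le_of_orthogonal_sum[OF c s cs])
  show "0 \<le> m \<bullet> p" using m_p by (simp add: inner_commute)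
  show "c * (m \<bullet> p) + s * (k \<bullet> m) = 0"
    using m_q by (simp add: q_decomp inner_add_left inner_commute[of m p])
  show "(m \<bullet> p)\<^sup>2 + (k \<bullet> m)\<^sup>2 \<le> 1"
    using inner_orthonormal_pair_sum_sq_le[OF p k pk m] by (simp add: inner_commute)
qed

theorem mainTheorem1:
  fixes k kp p q :: "'a::euclidean_space"
  assumes dim: "DIM('a) \<ge> 3"
    and k: "norm k = 1"
    and p: "p \<in> hemi_bd k"
    and q: "q \<in> hemi_int k"
    and arc_sub: "sarc p q \<subseteq> hemi k"
    and orthK: "arc_orth_at p q k"
    and short: "sdist p q < pi / 2"
    and kp: "norm kp = 1"
    and kp_q: "q \<in> hemi_bd kp"
    and kp_p: "p \<in> hemi kp"
    and orthKp: "arc_orth_at q p kp"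
  shows "kp \<noteq> k \<and> kp \<noteq> - k \<and>
    (\<forall>m. norm m = 1 \<and> q \<in> hemi_bd m \<and> p \<in> hemi m \<and> m \<noteq> k \<and> m \<noteq> - k
       \<longrightarrow> lune_thickness k kp \<le> lune_thickness k m)"
proof -
  define c where "c = p \<bullet> q"
  define s where "s = q \<bullet> k"
  \<comment> \<open>The hypotheses sarc p q \<subseteq> hemi k and q \<in> hemi_bd kp follow from the others.\<close>
  have pn: "norm p = 1" and pk: "p \<bullet> k = 0" and qn: "norm q = 1" and s: "s > 0"
    using p q by (auto simp: hemi_bd_def hemi_int_def usphere_def s_def)
  have c: "c \<ge> 0" "c \<le> 1"
    using inner_nonneg_if_sdist_le_pi_half[OF pn qn] short inner_unit_bounds[OF pn qn]
    by (simp_all add: c_def)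
  have q_decomp: "q = c *\<^sub>R p + s *\<^sub>R k" and cs: "c\<^sup>2 + s\<^sup>2 = 1"
    using arc_orth_at_hemi_bd_decomp[OF k p qn orthK] by (simp_all add: c_def s_def)
  have "p \<bullet> kp = s" and k_kp: "k \<bullet> kp = - c"
    using perp_hemisphere_center_inner[OF pn k pk qn q_decomp s cs kp _ orthKp] kp_p
    by (simp_all add: hemi_def)
  then have kp_ne: "kp \<noteq> k" "kp \<noteq> - k" using pk s by auto
  have "lune_thickness k kp \<le> lune_thickness k m"
    if m: "norm m = 1" "q \<in> hemi_bd m" "p \<in> hemi m" "m \<noteq> k" "m \<noteq> - k" for m
  proof -
    have "- (k \<bullet> m) \<le> c"
      using admissible_center_inner_le[OF pn k pk q_decomp c(1) s cs m(1)] m(2,3)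
      by (simp add: hemi_bd_def hemi_def inner_commute)
    moreover have "-1 \<le> - (k \<bullet> m)" using inner_unit_bounds(2)[OF k m(1)] by simp
    ultimately show ?thesis
      using lune_thickness_eq[OF dim k kp kp_ne] lune_thickness_eq[OF dim k m(1) m(4,5)]
        k_kp arccos_le_arccos c(2) by simp
  qed
  then show ?thesis using kp_ne by blast
qed

end
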